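(* Consider the liquid democracy game with complete information about types. Let $n_A,n_B$ be the numbers of partisans for $A$ and for $B$, $n_e$ the number of independent voters with precision $q_i=1$, and $n_U$ the number of independent voters with precision $q_i<1$. Suppose $n_e\ge 1$, $n_U\ge n_e+|n_A-n_B|+1$, and $\max(n_e+n_A,\ n_e+n_B)\le N/2$. Then the election game with delegation is dominance solvable (by iterated elimination of weakly dominated strategies), and the dominance-solvable outcome is the efficient outcome.
   Context: Voters $\mathcal N=\{1,\dots,N\}$ choose between alternatives $A$ and $B$ by simple majority of votes cast, ties broken uniformly at random. Unknown state $\omega\in\{a,b\}$ with common prior $\Pr(\omega=a)=\pi\in(0,1)$. Each voter $i$ has preference $p_i\in\{A,B,I\}$ and precision $q_i\in[1/2,1]$, commonly known. An independent ($p_i=I$) gets payoff 1 if the outcome matches the state ($A$ with $a$, $B$ with $b$), else 0; a partisan with $p_i=A$ (resp. $B$) gets 1 iff the outcome is $A$ (resp. $B$). Voter $i$ observes a private signal $s_i\in\{a,b\}$ with $\Pr(s_i=\omega\mid\omega)=q_i$, conditionally independent. In liquid democracy a (pure) strategy of voter $i$ maps her signal to one of: vote for $A$, vote for $B$, abstain, or delegate to another voter $j$; delegation is transitive, votes held by voters in a delegation cycle are abstained, and a non-delegating voter casts all votes she holds (own plus delegated) for the same alternative or abstains them all. The efficient outcome is the one maximizing the probability that the election outcome matches the state. *)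

theory Defs
  imports "HOL-Analysis.Analysis"
begin

(* Preferences: partisan for A, partisan for B, independent *)
datatype pref = PA | PB | PI

datatype action = VoteA | VoteB | Abstain | Delegate nat

(* Voters are 0..N-1.  A signal / state is a bool: True = a, False = b.
   A pure strategy maps the own signal to an action. *)
type_synonym strategy = "bool \<Rightarrow> action"

definition valid_action :: "nat \<Rightarrow> nat \<Rightarrow> action \<Rightarrow> bool" where
  "valid_action N i a = (case a of Delegate j \<Rightarrow> j < N \<and> j \<noteq> i | _ \<Rightarrow> True)"

definition all_strategies :: "nat \<Rightarrow> nat \<Rightarrow> strategy set" where
  "all_strategies N i = {f. \<forall>b. valid_action N i (f b)}"

definition next_voter :: "(nat \<Rightarrow> action) \<Rightarrow> nat \<Rightarrow> nat" where
  "next_voter act i = (case act i of Delegate j \<Rightarrow> j | _ \<Rightarrow> i)"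

(* Transitive delegation: after N steps, either a non-delegating voter is reached
   (who casts the vote), or the voter is in / leads into a cycle, and then the
   reached voter is a delegator: the vote is abstained. *)
definition final_action :: "nat \<Rightarrow> (nat \<Rightarrow> action) \<Rightarrow> nat \<Rightarrow> action" where
  "final_action N act i = act ((next_voter act ^^ N) i)"

definition votesA :: "nat \<Rightarrow> (nat \<Rightarrow> action) \<Rightarrow> nat" where
  "votesA N act = card {i. i < N \<and> final_action N act i = VoteA}"

definition votesB :: "nat \<Rightarrow> (nat \<Rightarrow> action) \<Rightarrow> nat" where
  "votesB N act = card {i. i < N \<and> final_action N act i = VoteB}"

definition probA :: "nat \<Rightarrow> (nat \<Rightarrow> action) \<Rightarrow> real" where
  "probA N act = (if votesA N act > votesB N act then 1
                  else if votesA N act < votesB N act then 0 else 1/2)"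

definition joint_prob :: "nat \<Rightarrow> real \<Rightarrow> (nat \<Rightarrow> real) \<Rightarrow> bool \<Rightarrow> (nat \<Rightarrow> bool) \<Rightarrow> real" where
  "joint_prob N \<pi> q w s =
     (if w then \<pi> else 1 - \<pi>) * (\<Prod>i<N. if s i = w then q i else 1 - q i)"

definition signal_profiles :: "nat \<Rightarrow> (nat \<Rightarrow> bool) set" where
  "signal_profiles N = PiE {..<N} (\<lambda>_. UNIV)"

definition expect :: "nat \<Rightarrow> real \<Rightarrow> (nat \<Rightarrow> real) \<Rightarrow> (nat \<Rightarrow> strategy)
                      \<Rightarrow> (bool \<Rightarrow> real \<Rightarrow> real) \<Rightarrow> real" where
  "expect N \<pi> q \<sigma> g =
     (\<Sum>w\<in>(UNIV::bool set). \<Sum>s\<in>signal_profiles N.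
        joint_prob N \<pi> q w s * g w (probA N (\<lambda>i. \<sigma> i (s i))))"

definition efficiency :: "nat \<Rightarrow> real \<Rightarrow> (nat \<Rightarrow> real) \<Rightarrow> (nat \<Rightarrow> strategy) \<Rightarrow> real" where
  "efficiency N \<pi> q \<sigma> = expect N \<pi> q \<sigma> (\<lambda>w pA. if w then pA else 1 - pA)"

definition payoff :: "nat \<Rightarrow> real \<Rightarrow> (nat \<Rightarrow> pref) \<Rightarrow> (nat \<Rightarrow> real) \<Rightarrow> nat
                      \<Rightarrow> (nat \<Rightarrow> strategy) \<Rightarrow> real" where
  "payoff N \<pi> p q i \<sigma> =
     (case p i of
        PA \<Rightarrow> expect N \<pi> q \<sigma> (\<lambda>w pA. pA)
      | PB \<Rightarrow> expect N \<pi> q \<sigma> (\<lambda>w pA. 1 - pA)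
      | PI \<Rightarrow> efficiency N \<pi> q \<sigma>)"

definition profiles :: "nat \<Rightarrow> (nat \<Rightarrow> strategy set) \<Rightarrow> (nat \<Rightarrow> strategy) set" where
  "profiles N S = PiE {..<N} S"

definition weakly_dominates ::
  "nat \<Rightarrow> real \<Rightarrow> (nat \<Rightarrow> pref) \<Rightarrow> (nat \<Rightarrow> real) \<Rightarrow> (nat \<Rightarrow> strategy set)
   \<Rightarrow> nat \<Rightarrow> strategy \<Rightarrow> strategy \<Rightarrow> bool" where
  "weakly_dominates N \<pi> p q S i y x =
     ((\<forall>\<sigma>\<in>profiles N S. payoff N \<pi> p q i (\<sigma>(i := x)) \<le> payoff N \<pi> p q i (\<sigma>(i := y)))
    \<and> (\<exists>\<sigma>\<in>profiles N S. payoff N \<pi> p q i (\<sigma>(i := x)) < payoff N \<pi> p q i (\<sigma>(i := y))))"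

definition elim_step ::
  "nat \<Rightarrow> real \<Rightarrow> (nat \<Rightarrow> pref) \<Rightarrow> (nat \<Rightarrow> real) \<Rightarrow> (nat \<Rightarrow> strategy set)
   \<Rightarrow> (nat \<Rightarrow> strategy set)" where
  "elim_step N \<pi> p q S =
     (\<lambda>i. {x \<in> S i. \<not> (\<exists>y\<in>S i. weakly_dominates N \<pi> p q S i y x)})"

definition reduced_game ::
  "nat \<Rightarrow> real \<Rightarrow> (nat \<Rightarrow> pref) \<Rightarrow> (nat \<Rightarrow> real) \<Rightarrow> nat \<Rightarrow> (nat \<Rightarrow> strategy set)" where
  "reduced_game N \<pi> p q k = (elim_step N \<pi> p q ^^ k) (all_strategies N)"

(* Dominance solvability (Moulin): iterated elimination reaches a reduced game
   (a fixed point of the elimination) in which every voter is indifferent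
   among all remaining strategy profiles. *)
definition dominance_solvable_at ::
  "nat \<Rightarrow> real \<Rightarrow> (nat \<Rightarrow> pref) \<Rightarrow> (nat \<Rightarrow> real) \<Rightarrow> nat \<Rightarrow> bool" where
  "dominance_solvable_at N \<pi> p q k =
     (elim_step N \<pi> p q (reduced_game N \<pi> p q k) = reduced_game N \<pi> p q k
      \<and> profiles N (reduced_game N \<pi> p q k) \<noteq> {}
      \<and> (\<forall>i<N. \<forall>\<sigma>\<in>profiles N (reduced_game N \<pi> p q k).
            \<forall>\<tau>\<in>profiles N (reduced_game N \<pi> p q k).
              payoff N \<pi> p q i \<sigma> = payoff N \<pi> p q i \<tau>))"

definition efficient ::
  "nat \<Rightarrow> real \<Rightarrow> (nat \<Rightarrow> real) \<Rightarrow> (nat \<Rightarrow> strategy) \<Rightarrow> bool" where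
  "efficient N \<pi> q \<sigma> =
     (\<forall>\<tau>\<in>profiles N (all_strategies N). efficiency N \<pi> q \<tau> \<le> efficiency N \<pi> q \<sigma>)"

end

theory Submission
  imports Defs
begin

text \<open>Two rounds of elimination suffice. In the first round a partisan keeps only the constant
  vote for her side and an expert (precision 1) keeps only voting her signal: these strategies
  are weakly dominant, and any other strategy loses against a profile in which the voter is
  pivotal. In the second round, experts vote sincerely, so delegating to an expert is weakly
  dominant for a non-expert independent; any other action is strictly worse against a profile in
  which the remaining non-experts vote so that she is pivotal, which is where
  \<open>n\<^sub>U \<ge> n\<^sub>e + \<bar>n\<^sub>A - n\<^sub>B\<bar> + 1\<close> enters. Once all non-experts delegate to experts, the state
  wins by a strict majority, because the partisans of the other side are fewer than the
  non-experts. So every remaining profile gives each voter the same payoff, the elimination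
  stops, and the outcome is efficient.\<close>

definition vote :: "bool \<Rightarrow> action" where
  "vote t = (if t then VoteA else VoteB)"

definition is_delegation :: "action \<Rightarrow> bool" where
  "is_delegation a = (case a of Delegate j \<Rightarrow> True | _ \<Rightarrow> False)"

definition direct_action :: "(nat \<Rightarrow> action) \<Rightarrow> nat \<Rightarrow> action" where
  "direct_action act k = (case act k of Delegate j \<Rightarrow> act j | a \<Rightarrow> a)"

definition valid_profile :: "nat \<Rightarrow> (nat \<Rightarrow> action) \<Rightarrow> bool" where
  "valid_profile N act = (\<forall>k<N. valid_action N k (act k))"

lemma vote_simps [simp]:
  "vote True = VoteA" "vote False = VoteB"
  "vote s = vote t \<longleftrightarrow> s = t"
  "vote t \<noteq> Abstain" "vote t \<noteq> Delegate j" "Abstain \<noteq> vote t" "Delegate j \<noteq> vote t"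
  by (auto simp: vote_def)

lemma is_delegation_simps [simp]:
  "is_delegation (Delegate j)" "\<not> is_delegation Abstain"
  "\<not> is_delegation VoteA" "\<not> is_delegation VoteB" "\<not> is_delegation (vote t)"
  by (auto simp: is_delegation_def vote_def)

lemma valid_action_simps [simp]:
  "valid_action N i (vote t)" "valid_action N i Abstain"
  "valid_action N i (Delegate j) \<longleftrightarrow> j < N \<and> j \<noteq> i"
  by (auto simp: valid_action_def vote_def)

lemma direct_action_nondelegating: "\<not> is_delegation (act k) \<Longrightarrow> direct_action act k = act k"
  by (cases "act k") (auto simp: direct_action_def)

section \<open>Transitive delegation\<close>

lemma funpow_fixpoint: "f y = y \<Longrightarrow> (f ^^ n) y = y"
  by (induction n) auto

lemma funpow_stays_at_fixpoint:
  assumes "f y = y" "(f ^^ t) x = y" "t \<le> n"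
  shows "(f ^^ n) x = y"
proof -
  obtain d where "n = d + t" using assms(3) le_iff_add by (metis add.commute)
  then have "(f ^^ n) x = (f ^^ d) ((f ^^ t) x)" by (simp add: funpow_add)
  then show ?thesis using assms(1,2) by (simp add: funpow_fixpoint)
qed

lemma funpow_cong_off_point:
  assumes "\<forall>x. x \<noteq> i \<longrightarrow> g x = f x" "\<forall>t<n. (f ^^ t) k \<noteq> i"
  shows "(g ^^ n) k = (f ^^ n) k"
  using assms(2) by (induction n) (auto simp: assms(1))

lemma next_voter_nondelegating: "\<not> is_delegation (act k) \<Longrightarrow> next_voter act k = k"
  by (cases "act k") (auto simp: next_voter_def)

lemma next_voter_Delegate: "act k = Delegate j \<Longrightarrow> next_voter act k = j"
  by (simp add: next_voter_def)

lemma next_voter_fun_upd_other: "x \<noteq> i \<Longrightarrow> next_voter (act(i := a)) x = next_voter act x"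
  by (simp add: next_voter_def)

lemma final_action_nondelegating: "\<not> is_delegation (act k) \<Longrightarrow> final_action N act k = act k"
  by (simp add: final_action_def funpow_fixpoint next_voter_nondelegating)

lemma final_action_direct:
  assumes "0 < N" "\<not> is_delegation (direct_action act k)"
  shows "final_action N act k = direct_action act k"
proof (cases "act k")
  case (Delegate j)
  then have "\<not> is_delegation (act j)" using assms(2) by (simp add: direct_action_def)
  have "(next_voter act ^^ N) k = j"
  proof (rule funpow_stays_at_fixpoint[where t = 1])
    show "next_voter act j = j" by (rule next_voter_nondelegating) fact
    show "(next_voter act ^^ 1) k = j" using Delegate by (simp add: next_voter_def)
  qed (use assms(1) in simp)
  then show ?thesis using Delegate by (simp add: final_action_def direct_action_def)
qed (simp_all add: final_action_nondelegating direct_action_def)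

lemma walk_less:
  assumes "valid_profile N act" "k < N"
  shows "(next_voter act ^^ n) k < N"
proof (induction n)
  case (Suc n)
  let ?x = "(next_voter act ^^ n) k"
  have "valid_action N ?x (act ?x)" using assms(1) Suc by (simp add: valid_profile_def)
  then show ?case using Suc
    by (cases "act ?x") (auto simp: next_voter_Delegate next_voter_nondelegating valid_action_def)
qed (simp add: assms(2))

lemma walk_endpoint_recurs:
  assumes "valid_profile N act" "k < N"
  shows "\<exists>t<N. (next_voter act ^^ t) k = (next_voter act ^^ N) k"
proof -
  let ?h = "\<lambda>t. (next_voter act ^^ t) k"
  have "\<not> inj_on ?h {..N}"
  proof
    assume "inj_on ?h {..N}"
    then have "card {..N} \<le> card {..<N}"
      by (rule card_inj_on_le) (use walk_less[OF assms] in auto)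
    then show False by simp
  qed
  then obtain a b where ab: "a \<le> N" "b \<le> N" "a \<noteq> b" "?h a = ?h b"
    unfolding inj_on_def by auto
  have shift: "?h (x + (N - y)) = ?h N" if "?h x = ?h y" "y \<le> N" for x y
  proof -
    have "?h (x + (N - y)) = (next_voter act ^^ (N - y)) (?h x)"
      by (metis add.commute comp_apply funpow_add)
    also have "\<dots> = ?h (N - y + y)" using that(1) by (simp add: funpow_add)
    finally show ?thesis using that(2) by simp
  qed
  show ?thesis
  proof (cases "a < b")
    case True
    then show ?thesis using ab shift[of a b] by (intro exI[of _ "a + (N - b)"]) auto
  next
    case False
    then show ?thesis using ab shift[of b a] by (intro exI[of _ "b + (N - a)"]) auto
  qed
qed

lemma final_action_fun_upd_nondelegating:
  assumes "\<not> is_delegation a"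
  shows "final_action N (act(i := a)) k \<in> {final_action N act k, a}"
proof -
  let ?f = "next_voter act" and ?g = "next_voter (act(i := a))"
  have agree: "\<forall>x. x \<noteq> i \<longrightarrow> ?g x = ?f x" using next_voter_fun_upd_other by metis
  show ?thesis
  proof (cases "\<exists>t\<le>N. (?f ^^ t) k = i")
    case True
    then obtain t where t: "t \<le> N" "(?f ^^ t) k = i" "\<forall>m<t. \<not> (m \<le> N \<and> (?f ^^ m) k = i)"
      using exists_least_iff[of "\<lambda>t. t \<le> N \<and> (?f ^^ t) k = i"] by blast
    then have "(?g ^^ t) k = i" using funpow_cong_off_point[OF agree, of t k] by auto
    then have "(?g ^^ N) k = i"
      using funpow_stays_at_fixpoint[of ?g i t k N] t(1) assms by (simp add: next_voter_nondelegating)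
    then show ?thesis by (simp add: final_action_def)
  next
    case False
    then have "(?g ^^ N) k = (?f ^^ N) k" "(?f ^^ N) k \<noteq> i"
      using funpow_cong_off_point[OF agree, of N k] by auto
    then show ?thesis by (simp add: final_action_def)
  qed
qed

lemma final_action_delegate_to_nondelegating:
  assumes valid: "valid_profile N act" and "k < N"
    and "act i = Delegate j" "\<not> is_delegation (act j)"
  shows "final_action N act k = final_action N (act(i := act j)) k"
proof -
  let ?f = "next_voter act" and ?g = "next_voter (act(i := act j))"
  have agree: "\<forall>x. x \<noteq> i \<longrightarrow> ?g x = ?f x" using next_voter_fun_upd_other by metis
  have fi: "?f i = j" and fj: "?f j = j" and gi: "?g i = i"
    using assms(3,4) by (simp_all add: next_voter_Delegate next_voter_nondelegating)
  show ?thesis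
  proof (cases "\<exists>t<N. (?f ^^ t) k = i")
    case True
    then obtain t where t: "t < N" "(?f ^^ t) k = i" "\<forall>m<t. \<not> (m < N \<and> (?f ^^ m) k = i)"
      using exists_least_iff[of "\<lambda>t. t < N \<and> (?f ^^ t) k = i"] by blast
    then have "(?g ^^ t) k = i" using funpow_cong_off_point[OF agree, of t k] by auto
    then have "(?g ^^ N) k = i" using funpow_stays_at_fixpoint[of ?g i t k N] t(1) gi by simp
    moreover have "(?f ^^ N) k = j"
      using funpow_stays_at_fixpoint[of ?f j "Suc t" k N] t fi fj by simp
    ultimately show ?thesis by (simp add: final_action_def)
  next
    case False
    then have "(?g ^^ N) k = (?f ^^ N) k" "(?f ^^ N) k \<noteq> i"
      using funpow_cong_off_point[OF agree, of N k] walk_endpoint_recurs[OF valid \<open>k < N\<close>] by auto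
    then show ?thesis by (simp add: final_action_def)
  qed
qed

lemma final_action_fun_upd_outside:
  assumes "valid_profile N act" "k < N" "N \<le> i"
  shows "final_action N (act(i := a)) k = final_action N act k"
proof -
  let ?f = "next_voter act" and ?g = "next_voter (act(i := a))"
  have "\<forall>x. x \<noteq> i \<longrightarrow> ?g x = ?f x" using next_voter_fun_upd_other by metis
  moreover have "\<And>t. (?f ^^ t) k \<noteq> i" using walk_less[OF assms(1,2)] assms(3) by (metis leD)
  ultimately have "(?g ^^ N) k = (?f ^^ N) k" "(?f ^^ N) k \<noteq> i"
    using funpow_cong_off_point[of i _ _ N k] by auto
  then show ?thesis by (simp add: final_action_def)
qed

section \<open>Tallies and winning probabilities\<close>

definition votes_for :: "nat \<Rightarrow> (nat \<Rightarrow> action) \<Rightarrow> bool \<Rightarrow> nat" where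
  "votes_for N act t = card {k. k < N \<and> final_action N act k = vote t}"

definition majority_score :: "nat \<Rightarrow> nat \<Rightarrow> real" where
  "majority_score a b = (if b < a then 1 else if a < b then 0 else 1/2)"

definition win_prob :: "nat \<Rightarrow> (nat \<Rightarrow> action) \<Rightarrow> bool \<Rightarrow> real" where
  "win_prob N act t = (if t then probA N act else 1 - probA N act)"

lemma win_prob_eq_majority_score:
  "win_prob N act t = majority_score (votes_for N act t) (votes_for N act (\<not> t))"
  by (cases t) (auto simp: win_prob_def probA_def majority_score_def votes_for_def votesA_def votesB_def)

lemma majority_score_mono: "a \<le> a' \<Longrightarrow> b' \<le> b \<Longrightarrow> majority_score a b \<le> majority_score a' b'"
  by (auto simp: majority_score_def)

lemma majority_score_pivotal:
  "a = b \<or> a + 1 = b \<Longrightarrow> b \<le> b' \<Longrightarrow> majority_score a b' < majority_score (a + 1) b"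
  by (auto simp: majority_score_def)

lemma win_prob_le_1: "win_prob N act t \<le> 1"
  by (simp add: win_prob_eq_majority_score majority_score_def)

lemma votes_for_cong:
  "(\<And>k. k < N \<Longrightarrow> final_action N act k = final_action N act' k) \<Longrightarrow> votes_for N act t = votes_for N act' t"
  unfolding votes_for_def by (rule arg_cong[where f = card]) auto

lemma win_prob_cong:
  "(\<And>k. k < N \<Longrightarrow> final_action N act k = final_action N act' k) \<Longrightarrow> win_prob N act t = win_prob N act' t"
  by (simp add: win_prob_eq_majority_score votes_for_cong[of N act act'])

lemma votes_for_fun_upd_vote:
  "votes_for N act t \<le> votes_for N (act(i := vote t)) t"
  "votes_for N (act(i := vote t)) (\<not> t) \<le> votes_for N act (\<not> t)"
proof -
  have "final_action N (act(i := vote t)) k \<in> {final_action N act k, vote t}" for k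
    by (rule final_action_fun_upd_nondelegating) simp
  then show "votes_for N act t \<le> votes_for N (act(i := vote t)) t"
    and "votes_for N (act(i := vote t)) (\<not> t) \<le> votes_for N act (\<not> t)"
    unfolding votes_for_def by (auto intro!: card_mono) (metis insert_iff singletonD vote_simps(3))+
qed

lemma win_prob_le_vote: "win_prob N (act(i := a)) t \<le> win_prob N (act(i := vote t)) t"
  using votes_for_fun_upd_vote[where act = "act(i := a)" and i = i]
  by (simp add: win_prob_eq_majority_score majority_score_mono)

lemma win_prob_delegate:
  assumes "valid_profile N act" "j < N" "j \<noteq> i" "\<not> is_delegation (act j)"
  shows "win_prob N (act(i := Delegate j)) t = win_prob N (act(i := act j)) t"
proof (rule win_prob_cong)
  fix k assume "k < N"
  moreover have "valid_profile N (act(i := Delegate j))"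
    using assms(1-3) by (simp add: valid_profile_def)
  ultimately show "final_action N (act(i := Delegate j)) k = final_action N (act(i := act j)) k"
    using final_action_delegate_to_nondelegating[of N "act(i := Delegate j)" k i j] assms(3,4) by simp
qed

lemma win_prob_fun_upd_outside:
  "valid_profile N act \<Longrightarrow> N \<le> i \<Longrightarrow> win_prob N (act(i := a)) t = win_prob N act t"
  by (rule win_prob_cong) (rule final_action_fun_upd_outside)

lemma votes_for_direct:
  assumes "\<forall>k<N. \<not> is_delegation (direct_action act k)"
  shows "votes_for N act t = card {k. k < N \<and> direct_action act k = vote t}"
  unfolding votes_for_def using assms final_action_direct[of N act]
  by (intro arg_cong[where f = card]) auto

lemma votes_for_fun_upd:
  assumes "i < N" and AB: "A \<subseteq> {..<N} - {i}" "B \<subseteq> {..<N} - {i}" "A \<inter> B = {}"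
    and act: "\<forall>k<N. k \<noteq> i \<longrightarrow> act k = (if k \<in> A then vote t else if k \<in> B then vote (\<not> t) else Abstain)"
    and valid: "valid_action N i X"
  shows "votes_for N (act(i := X)) t = card A + (if X = vote t \<or> (\<exists>m\<in>A. X = Delegate m) then 1 else 0)"
    and "votes_for N (act(i := X)) (\<not> t)
      = card B + (if X = vote (\<not> t) \<or> (\<exists>m\<in>B. X = Delegate m) then 1 else 0)"
proof -
  let ?act = "act(i := X)"
  have others: "direct_action ?act k = act k" "\<not> is_delegation (act k)" if "k < N" "k \<noteq> i" for k
    using that act by (simp_all add: direct_action_nondelegating)
  have self: "direct_action ?act i = (case X of Delegate m \<Rightarrow> act m | _ \<Rightarrow> X)"
    using valid by (cases X) (auto simp: direct_action_def)
  have "\<not> is_delegation (direct_action ?act i)"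
    unfolding self using valid others(2) by (cases X) auto
  then have "\<not> is_delegation (direct_action ?act k)" if "k < N" for k
    using that others[of k] by (cases "k = i") auto
  then have tally: "votes_for N ?act u = card {k. k < N \<and> direct_action ?act k = vote u}" for u
    by (simp add: votes_for_direct)
  have split: "{k. k < N \<and> direct_action ?act k = vote u}
      = {k. k < N \<and> k \<noteq> i \<and> act k = vote u} \<union> (if direct_action ?act i = vote u then {i} else {})" for u
  proof (rule set_eqI)
    fix k
    show "k \<in> {k. k < N \<and> direct_action ?act k = vote u} \<longleftrightarrow>
      k \<in> {k. k < N \<and> k \<noteq> i \<and> act k = vote u} \<union> (if direct_action ?act i = vote u then {i} else {})"
      using others(1)[of k] \<open>i < N\<close> by (cases "k = i") auto
  qed
  have "{k. k < N \<and> k \<noteq> i \<and> act k = vote t} = A" "{k. k < N \<and> k \<noteq> i \<and> act k = vote (\<not> t)} = B"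
    using AB act by (auto split: if_splits)
  moreover have "direct_action ?act i = vote t \<longleftrightarrow> X = vote t \<or> (\<exists>m\<in>A. X = Delegate m)"
    and "direct_action ?act i = vote (\<not> t) \<longleftrightarrow> X = vote (\<not> t) \<or> (\<exists>m\<in>B. X = Delegate m)"
    unfolding self using valid act AB by (cases X; auto)+
  ultimately show "votes_for N ?act t = card A + (if X = vote t \<or> (\<exists>m\<in>A. X = Delegate m) then 1 else 0)"
    and "votes_for N ?act (\<not> t) = card B + (if X = vote (\<not> t) \<or> (\<exists>m\<in>B. X = Delegate m) then 1 else 0)"
    unfolding tally split by (subst card_Un_disjoint; auto)+
qed

lemma win_prob_pivotal:
  assumes "i < N" "A \<subseteq> {..<N} - {i}" "B \<subseteq> {..<N} - {i}" "A \<inter> B = {}"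
    and "\<forall>k<N. k \<noteq> i \<longrightarrow> act k = (if k \<in> A then vote t else if k \<in> B then vote (\<not> t) else Abstain)"
    and "card A = card B \<or> card A + 1 = card B"
    and "valid_action N i X" "valid_action N i Y"
    and "Y = vote t \<or> (\<exists>m\<in>A. Y = Delegate m)" "X \<noteq> vote t" "\<forall>m\<in>A. X \<noteq> Delegate m"
  shows "win_prob N (act(i := X)) t < win_prob N (act(i := Y)) t"
proof -
  have "\<not> (Y = vote (\<not> t) \<or> (\<exists>m\<in>B. Y = Delegate m))" using assms(4,9) by auto
  then show ?thesis
    using majority_score_pivotal[OF assms(6), of "votes_for N (act(i := X)) (\<not> t)"] assms(9-11)
    by (simp add: win_prob_eq_majority_score votes_for_fun_upd[OF assms(1-5,7)]
        votes_for_fun_upd[OF assms(1-5,8)])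
qed

lemma win_prob_two_ahead:
  assumes "i < N" "A \<subseteq> {..<N} - {i}" "card A = 2"
    and "\<forall>k<N. k \<noteq> i \<longrightarrow> act k = (if k \<in> A then vote t else Abstain)"
    and "valid_action N i X"
  shows "win_prob N (act(i := X)) t = 1"
proof -
  have "\<forall>k<N. k \<noteq> i \<longrightarrow> act k = (if k \<in> A then vote t else if k \<in> {} then vote (\<not> t) else Abstain)"
    using assms(4) by simp
  from votes_for_fun_upd[OF assms(1,2) _ _ this assms(5)]
  have "2 \<le> votes_for N (act(i := X)) t" "votes_for N (act(i := X)) (\<not> t) \<le> 1"
    using assms(3) by auto
  then show ?thesis by (simp add: win_prob_eq_majority_score majority_score_def)
qed

section \<open>Payoffs\<close>

definition target :: "(nat \<Rightarrow> pref) \<Rightarrow> nat \<Rightarrow> bool \<Rightarrow> bool" where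
  "target p i w = (case p i of PA \<Rightarrow> True | PB \<Rightarrow> False | PI \<Rightarrow> w)"

definition action_profile :: "(nat \<Rightarrow> strategy) \<Rightarrow> (nat \<Rightarrow> bool) \<Rightarrow> nat \<Rightarrow> action" where
  "action_profile \<sigma> s = (\<lambda>k. \<sigma> k (s k))"

lemma action_profile_fun_upd: "action_profile (\<sigma>(i := x)) s = (action_profile \<sigma> s)(i := x (s i))"
  by (auto simp: action_profile_def)

lemma payoff_eq_sum:
  "payoff N \<pi> p q i \<sigma> = (\<Sum>(w, s)\<in>UNIV \<times> signal_profiles N.
     joint_prob N \<pi> q w s * win_prob N (action_profile \<sigma> s) (target p i w))"
  by (cases "p i") (simp_all add: payoff_def expect_def efficiency_def win_prob_def target_def
      action_profile_def sum.cartesian_product)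

lemma efficiency_eq_sum:
  "efficiency N \<pi> q \<sigma> = (\<Sum>(w, s)\<in>UNIV \<times> signal_profiles N.
     joint_prob N \<pi> q w s * win_prob N (action_profile \<sigma> s) w)"
  by (simp add: efficiency_def expect_def win_prob_def action_profile_def sum.cartesian_product)

lemma finite_signal_profiles: "finite (signal_profiles N)"
  by (simp add: signal_profiles_def finite_PiE)

lemma joint_prob_nonneg:
  "0 \<le> \<pi> \<Longrightarrow> \<pi> \<le> 1 \<Longrightarrow> \<forall>k<N. 0 \<le> q k \<and> q k \<le> 1 \<Longrightarrow> 0 \<le> joint_prob N \<pi> q w s"
  unfolding joint_prob_def by (auto intro!: mult_nonneg_nonneg prod_nonneg)

lemma joint_prob_pos:
  "0 < \<pi> \<Longrightarrow> \<pi> < 1 \<Longrightarrow> \<forall>k<N. 0 < q k \<and> (s k \<noteq> w \<longrightarrow> q k < 1) \<Longrightarrow> 0 < joint_prob N \<pi> q w s"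
  unfolding joint_prob_def by (auto intro!: mult_pos_pos prod_pos)

lemma signal_eq_state_if_precise:
  assumes "joint_prob N \<pi> q w s \<noteq> 0" "k < N" "q k = 1"
  shows "s k = w"
proof (rule ccontr)
  assume "s k \<noteq> w"
  then have "(\<Prod>i<N. if s i = w then q i else 1 - q i) = 0"
    using assms(2,3) by (intro prod_zero) auto
  then show False using assms(1) by (simp add: joint_prob_def)
qed

lemma payoff_summand_mono:
  assumes "0 \<le> joint_prob N \<pi> q w s"
    and "joint_prob N \<pi> q w s \<noteq> 0 \<Longrightarrow> a \<le> b"
  shows "joint_prob N \<pi> q w s * a \<le> joint_prob N \<pi> q w s * b"
  using assms by (cases "joint_prob N \<pi> q w s = 0") (auto intro: mult_left_mono)

lemma payoff_mono:
  assumes nonneg: "\<And>w s. 0 \<le> joint_prob N \<pi> q w s"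
    and le: "\<And>w s. s \<in> signal_profiles N \<Longrightarrow> joint_prob N \<pi> q w s \<noteq> 0 \<Longrightarrow>
      win_prob N (action_profile \<sigma> s) (target p i w) \<le> win_prob N (action_profile \<sigma>' s) (target p i w)"
  shows "payoff N \<pi> p q i \<sigma> \<le> payoff N \<pi> p q i \<sigma>'"
  unfolding payoff_eq_sum
  by (rule sum_mono) (use payoff_summand_mono[OF nonneg le] in auto)

lemma payoff_strict_mono:
  assumes nonneg: "\<And>w s. 0 \<le> joint_prob N \<pi> q w s"
    and le: "\<And>w s. s \<in> signal_profiles N \<Longrightarrow> joint_prob N \<pi> q w s \<noteq> 0 \<Longrightarrow>
      win_prob N (action_profile \<sigma> s) (target p i w) \<le> win_prob N (action_profile \<sigma>' s) (target p i w)"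
    and "s\<^sub>0 \<in> signal_profiles N" "0 < joint_prob N \<pi> q w\<^sub>0 s\<^sub>0"
    and "win_prob N (action_profile \<sigma> s\<^sub>0) (target p i w\<^sub>0)
      < win_prob N (action_profile \<sigma>' s\<^sub>0) (target p i w\<^sub>0)"
  shows "payoff N \<pi> p q i \<sigma> < payoff N \<pi> p q i \<sigma>'"
  unfolding payoff_eq_sum
proof (rule sum_strict_mono_ex1, goal_cases)
  case 1
  show ?case by (intro finite_cartesian_product) (simp_all add: finite_signal_profiles)
next
  case 2
  show ?case using payoff_summand_mono[OF nonneg le] by auto
next
  case 3
  show ?case using assms(3-5) by (intro bexI[of _ "(w\<^sub>0, s\<^sub>0)"]) auto
qed

section \<open>Iterated elimination of weakly dominated strategies\<close>

lemma restrict_in_profiles_iff: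
  "(\<lambda>k. if k < N then f k else undefined) \<in> profiles N S \<longleftrightarrow> (\<forall>k<N. f k \<in> S k)"
  by (auto simp: profiles_def PiE_def extensional_def Pi_def)

lemma profiles_memD: "\<sigma> \<in> profiles N S \<Longrightarrow> k < N \<Longrightarrow> \<sigma> k \<in> S k"
  by (auto simp: profiles_def PiE_def Pi_def)

lemma profiles_fun_upd: "\<sigma> \<in> profiles N S \<Longrightarrow> i < N \<Longrightarrow> x \<in> S i \<Longrightarrow> \<sigma>(i := x) \<in> profiles N S"
  unfolding profiles_def using PiE_fun_upd[of x S i \<sigma> "{..<N}"] by (simp add: insert_absorb)

lemma valid_profile_action_profile:
  "\<sigma> \<in> profiles N S \<Longrightarrow> \<forall>k<N. S k \<subseteq> all_strategies N k \<Longrightarrow> valid_profile N (action_profile \<sigma> s)"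
  unfolding valid_profile_def action_profile_def all_strategies_def using profiles_memD by blast

lemma elim_step_subset: "elim_step N \<pi> p q S i \<subseteq> S i"
  by (auto simp: elim_step_def)

lemma elim_step_singleton: "S i = {g} \<Longrightarrow> elim_step N \<pi> p q S i = {g}"
  by (auto simp: elim_step_def weakly_dominates_def)

lemma weakly_dominant_in_elim_step:
  assumes "g \<in> S i"
    and "\<And>\<sigma> y. \<sigma> \<in> profiles N S \<Longrightarrow> payoff N \<pi> p q i (\<sigma>(i := y)) \<le> payoff N \<pi> p q i (\<sigma>(i := g))"
  shows "g \<in> elim_step N \<pi> p q S i"
  using assms by (auto simp: elim_step_def weakly_dominates_def not_less)

lemma not_in_elim_step_if_beaten_by_weakly_dominant:
  assumes "g \<in> S i"
    and "\<And>\<sigma> y. \<sigma> \<in> profiles N S \<Longrightarrow> payoff N \<pi> p q i (\<sigma>(i := y)) \<le> payoff N \<pi> p q i (\<sigma>(i := g))"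
    and "\<sigma> \<in> profiles N S" "payoff N \<pi> p q i (\<sigma>(i := x)) < payoff N \<pi> p q i (\<sigma>(i := g))"
  shows "x \<notin> elim_step N \<pi> p q S i"
  using assms unfolding elim_step_def weakly_dominates_def by blast

lemma in_elim_step_if_rivals_beaten:
  assumes "x \<in> S i"
    and "\<And>y. y \<in> S i \<Longrightarrow> y \<noteq> x \<Longrightarrow>
      \<exists>\<sigma>\<in>profiles N S. payoff N \<pi> p q i (\<sigma>(i := y)) < payoff N \<pi> p q i (\<sigma>(i := x))"
  shows "x \<in> elim_step N \<pi> p q S i"
proof -
  have "\<not> weakly_dominates N \<pi> p q S i y x" if y: "y \<in> S i" for y
  proof (cases "y = x")
    case False
    then obtain \<sigma> where "\<sigma> \<in> profiles N S" "payoff N \<pi> p q i (\<sigma>(i := y)) < payoff N \<pi> p q i (\<sigma>(i := x))"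
      using assms(2)[OF y] by blast
    then show ?thesis unfolding weakly_dominates_def by (meson not_le)
  qed (simp add: weakly_dominates_def)
  then show ?thesis using assms(1) by (simp add: elim_step_def)
qed

locale delegation_game =
  fixes N :: nat and \<pi> :: real and p :: "nat \<Rightarrow> pref" and q :: "nat \<Rightarrow> real"
  assumes prior: "0 < \<pi>" "\<pi> < 1"
    and precision: "\<forall>i<N. 1/2 \<le> q i \<and> q i \<le> 1"
    and experts_exist: "card {i. i < N \<and> p i = PI \<and> q i = 1} \<ge> 1"
    and many_nonexperts: "int (card {i. i < N \<and> p i = PI \<and> q i < 1})
      \<ge> int (card {i. i < N \<and> p i = PI \<and> q i = 1})
        + \<bar>int (card {i. i < N \<and> p i = PA}) - int (card {i. i < N \<and> p i = PB})\<bar> + 1"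
begin

definition experts :: "nat set" where
  "experts = {i. i < N \<and> p i = PI \<and> q i = 1}"

definition nonexperts :: "nat set" where
  "nonexperts = {i. i < N \<and> p i = PI \<and> q i < 1}"

definition partisans :: "bool \<Rightarrow> nat set" where
  "partisans t = {i. i < N \<and> p i = (if t then PA else PB)}"

definition S1 :: "nat \<Rightarrow> strategy set" where
  "S1 = elim_step N \<pi> p q (all_strategies N)"

definition S2 :: "nat \<Rightarrow> strategy set" where
  "S2 = elim_step N \<pi> p q S1"

definition one_deviant_signals :: "nat \<Rightarrow> bool \<Rightarrow> bool \<Rightarrow> nat \<Rightarrow> bool" where
  "one_deviant_signals i b w = (\<lambda>k. if k < N then if k = i then b else w else undefined)"

lemma voter_cases [consumes 1]:
  assumes "k < N"
  obtains (partisan) t where "k \<in> partisans t" | (expert) "k \<in> experts" | (nonexpert) "k \<in> nonexperts"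
proof (cases "p k")
  case PA
  then show ?thesis using assms partisan[of True] by (simp add: partisans_def)
next
  case PB
  then show ?thesis using assms partisan[of False] by (simp add: partisans_def)
next
  case PI
  moreover have "q k \<le> 1" using precision assms by auto
  ultimately show ?thesis using assms expert nonexpert by (force simp: experts_def nonexperts_def)
qed

lemma voter_classes_disjoint:
  "partisans t \<inter> partisans (\<not> t) = {}" "partisans t \<inter> experts = {}" "partisans t \<inter> nonexperts = {}"
  "experts \<inter> nonexperts = {}"
  by (auto simp: partisans_def experts_def nonexperts_def)

lemma voter_classes_subset:
  "partisans t \<subseteq> {..<N}" "experts \<subseteq> {..<N}" "nonexperts \<subseteq> {..<N}"
  by (auto simp: partisans_def experts_def nonexperts_def)

lemma target_partisan: "i \<in> partisans t \<Longrightarrow> target p i w = t"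
  by (cases t) (auto simp: partisans_def target_def)

lemma target_independent: "i \<in> experts \<union> nonexperts \<Longrightarrow> target p i w = w"
  by (auto simp: experts_def nonexperts_def target_def)

lemma card_voters: "N = card (partisans t) + card (partisans (\<not> t)) + card experts + card nonexperts"
proof -
  have "k \<in> partisans t \<union> partisans (\<not> t) \<union> experts \<union> nonexperts" if "k < N" for k
    using that
  proof (cases rule: voter_cases)
    case (partisan u)
    then show ?thesis by (cases "u = t") auto
  qed auto
  then have "{..<N} = partisans t \<union> partisans (\<not> t) \<union> experts \<union> nonexperts"
    using voter_classes_subset by auto
  then have "N = card (partisans t \<union> partisans (\<not> t) \<union> experts \<union> nonexperts)"
    by (metis card_lessThan)
  moreover have "finite (partisans t)" "finite (partisans (\<not> t))" "finite experts" "finite nonexperts"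
    using voter_classes_subset by (auto intro: finite_subset)
  ultimately show ?thesis
    using voter_classes_disjoint
    by (simp add: card_Un_disjoint Int_Un_distrib2)
qed

lemma card_experts_ge_1: "card experts \<ge> 1"
  using experts_exist by (simp add: experts_def)

lemma obtain_expert:
  obtains j where "j \<in> experts"
  using card_experts_ge_1 by (metis card.empty equals0I not_one_le_zero)

lemma card_nonexperts_ge:
  "card (partisans t) + card experts + 1 \<le> card (partisans (\<not> t)) + card nonexperts"
proof -
  have "int (card nonexperts) \<ge> int (card experts)
      + \<bar>int (card (partisans True)) - int (card (partisans False))\<bar> + 1"
    using many_nonexperts by (simp add: experts_def nonexperts_def partisans_def)
  then show ?thesis by (cases t; simp; linarith)
qed

lemma exists_other_voter: "\<exists>m<N. m \<noteq> a \<and> m \<noteq> b"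
proof -
  have "3 \<le> N" using card_voters[of True] card_experts_ge_1 card_nonexperts_ge[of True] by linarith
  moreover have "card {a, b} \<le> 2" by (cases "a = b") auto
  ultimately have "\<not> {..<N} \<subseteq> {a, b}"
    using card_mono[of "{a, b}" "{..<N}"] by fastforce
  then show ?thesis by auto
qed

lemma joint_prob_ge_0: "0 \<le> joint_prob N \<pi> q w s"
  using prior precision by (intro joint_prob_nonneg) auto

lemma expert_signal_eq_state: "joint_prob N \<pi> q w s \<noteq> 0 \<Longrightarrow> j \<in> experts \<Longrightarrow> s j = w"
  using signal_eq_state_if_precise[of N \<pi> q w s j] by (auto simp: experts_def)

lemma one_deviant_signals:
  "one_deviant_signals i b w \<in> signal_profiles N"
  "i < N \<Longrightarrow> one_deviant_signals i b w i = b"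
  "k < N \<Longrightarrow> k \<noteq> i \<Longrightarrow> one_deviant_signals i b w k = w"
  "b = w \<or> q i < 1 \<Longrightarrow> 0 < joint_prob N \<pi> q w (one_deviant_signals i b w)"
  using prior precision
  by (auto simp: one_deviant_signals_def signal_profiles_def intro!: joint_prob_pos)

lemma S1_subset: "S1 k \<subseteq> all_strategies N k"
  by (simp add: S1_def elim_step_subset)

lemma S2_subset: "S2 k \<subseteq> S1 k"
  by (simp add: S2_def elim_step_subset)

lemma win_prob_le_delegate_to_sincere_expert:
  assumes "\<sigma> \<in> profiles N S" "\<forall>k<N. S k \<subseteq> all_strategies N k" "j \<in> experts" "j \<noteq> i" "\<sigma> j = vote"
    and "joint_prob N \<pi> q w s \<noteq> 0"
  shows "win_prob N (action_profile (\<sigma>(i := y)) s) w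
    \<le> win_prob N (action_profile (\<sigma>(i := (\<lambda>_. Delegate j))) s) w"
proof -
  let ?act = "action_profile \<sigma> s"
  have "?act j = vote w"
    using expert_signal_eq_state[OF assms(6,3)] assms(5) by (simp add: action_profile_def)
  then have "win_prob N (?act(i := Delegate j)) w = win_prob N (?act(i := vote w)) w"
    using win_prob_delegate[OF valid_profile_action_profile[OF assms(1,2), of s], of j i w] assms(3,4)
    by (simp add: experts_def)
  then show ?thesis using win_prob_le_vote by (simp add: action_profile_fun_upd)
qed

lemma payoff_le_delegate_to_sincere_expert:
  assumes "\<sigma> \<in> profiles N S" "\<forall>k<N. S k \<subseteq> all_strategies N k" "j \<in> experts" "i \<in> nonexperts"
    and "\<sigma> j = vote"
  shows "payoff N \<pi> p q i (\<sigma>(i := y)) \<le> payoff N \<pi> p q i (\<sigma>(i := (\<lambda>_. Delegate j)))"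
proof (rule payoff_mono[OF joint_prob_ge_0])
  fix w s assume "s \<in> signal_profiles N" "joint_prob N \<pi> q w s \<noteq> 0"
  moreover have "j \<noteq> i" using assms(3,4) voter_classes_disjoint(4) by blast
  ultimately show "win_prob N (action_profile (\<sigma>(i := y)) s) (target p i w)
      \<le> win_prob N (action_profile (\<sigma>(i := (\<lambda>_. Delegate j))) s) (target p i w)"
    using win_prob_le_delegate_to_sincere_expert[OF assms(1-3) _ assms(5)] assms(4)
    by (simp add: target_independent)
qed

lemma S1_eq_singleton:
  assumes "i < N" "g \<in> all_strategies N i"
    and right: "\<And>w s. s \<in> signal_profiles N \<Longrightarrow> joint_prob N \<pi> q w s \<noteq> 0 \<Longrightarrow> g (s i) = vote (target p i w)"
  shows "S1 i = {g}"
proof -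
  have pointwise: "win_prob N (action_profile (\<sigma>(i := y)) s) (target p i w)
      \<le> win_prob N (action_profile (\<sigma>(i := g)) s) (target p i w)"
    if "s \<in> signal_profiles N" "joint_prob N \<pi> q w s \<noteq> 0" for \<sigma> y s w
    using right[OF that] win_prob_le_vote by (simp add: action_profile_fun_upd)
  have weak: "payoff N \<pi> p q i (\<sigma>(i := y)) \<le> payoff N \<pi> p q i (\<sigma>(i := g))" for \<sigma> y
    by (rule payoff_mono[OF joint_prob_ge_0 pointwise])
  have "x = g" if x: "x \<in> S1 i" for x
  proof (rule ccontr)
    assume "x \<noteq> g"
    then obtain b where b: "x b \<noteq> g b" by auto
    define t where "t = target p i b"
    let ?s = "one_deviant_signals i b b"
    have s: "?s \<in> signal_profiles N" "?s i = b" "0 < joint_prob N \<pi> q b ?s"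
      using \<open>i < N\<close> by (simp_all add: one_deviant_signals)
    then have g_b: "g b = vote t" using right[of ?s b] by (simp add: t_def)
    obtain m where m: "m < N" "m \<noteq> i" using exists_other_voter by blast
    define \<sigma> :: "nat \<Rightarrow> strategy" where
      "\<sigma> = (\<lambda>k. if k < N then if k = m then (\<lambda>_. vote (\<not> t)) else (\<lambda>_. Abstain) else undefined)"
    have \<sigma>: "\<sigma> \<in> profiles N (all_strategies N)"
      by (simp add: \<sigma>_def restrict_in_profiles_iff all_strategies_def)
    have "x \<in> all_strategies N i" using x S1_subset by blast
    then have "win_prob N ((action_profile \<sigma> ?s)(i := x b)) t
        < win_prob N ((action_profile \<sigma> ?s)(i := g b)) t"
      using \<open>i < N\<close> m b g_b assms(2)
      by (intro win_prob_pivotal[where A = "{}" and B = "{m}"])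
        (auto simp: \<sigma>_def action_profile_def all_strategies_def)
    then have "payoff N \<pi> p q i (\<sigma>(i := x)) < payoff N \<pi> p q i (\<sigma>(i := g))"
      using s by (intro payoff_strict_mono[OF joint_prob_ge_0 pointwise s(1,3)])
        (simp_all add: action_profile_fun_upd t_def)
    then show False
      using not_in_elim_step_if_beaten_by_weakly_dominant[OF assms(2) weak \<sigma>] x by (simp add: S1_def)
  qed
  moreover have "g \<in> S1 i"
    unfolding S1_def by (rule weakly_dominant_in_elim_step) (use assms(2) weak in auto)
  ultimately show ?thesis by blast
qed

lemma S1_partisan: "i \<in> partisans t \<Longrightarrow> S1 i = {\<lambda>_. vote t}"
  by (rule S1_eq_singleton) (auto simp: partisans_def all_strategies_def target_partisan)

lemma S1_expert: "i \<in> experts \<Longrightarrow> S1 i = {vote}"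
  using expert_signal_eq_state
  by (intro S1_eq_singleton) (auto simp: experts_def all_strategies_def target_independent)

lemma delegate_in_S1:
  assumes i: "i \<in> nonexperts" and j: "j \<in> experts"
  shows "(\<lambda>_. Delegate j) \<in> S1 i"
  unfolding S1_def
proof (rule in_elim_step_if_rivals_beaten)
  have "i < N" "q i < 1" "j < N" "j \<noteq> i"
    using i j voter_classes_disjoint(4) by (auto simp: experts_def nonexperts_def)
  then show "(\<lambda>_. Delegate j) \<in> all_strategies N i" by (simp add: all_strategies_def)
  fix y assume y: "y \<in> all_strategies N i" "y \<noteq> (\<lambda>_. Delegate j)"
  then obtain b where b: "y b \<noteq> Delegate j" by auto
  define w where "w = (y b \<noteq> VoteA)"
  have "y b \<noteq> vote w" by (cases w) (auto simp: w_def)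
  obtain m where m: "m < N" "m \<noteq> i" "m \<noteq> j" using exists_other_voter by blast
  define \<sigma> :: "nat \<Rightarrow> strategy" where "\<sigma> = (\<lambda>k. if k < N then if k = j then vote
      else if k = m then (\<lambda>_. vote (\<not> w)) else (\<lambda>_. Abstain) else undefined)"
  have \<sigma>: "\<sigma> \<in> profiles N (all_strategies N)" "\<sigma> j = vote"
    using \<open>j < N\<close> by (simp_all add: \<sigma>_def restrict_in_profiles_iff all_strategies_def)
  let ?s = "one_deviant_signals i b w"
  have s: "?s \<in> signal_profiles N" "?s i = b" "0 < joint_prob N \<pi> q w ?s"
    using \<open>i < N\<close> \<open>q i < 1\<close> by (simp_all add: one_deviant_signals)
  have "win_prob N ((action_profile \<sigma> ?s)(i := y b)) w
      < win_prob N ((action_profile \<sigma> ?s)(i := Delegate j)) w"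
    using \<open>i < N\<close> \<open>j < N\<close> \<open>j \<noteq> i\<close> m b \<open>y b \<noteq> vote w\<close> y(1)
    by (intro win_prob_pivotal[where A = "{j}" and B = "{m}"])
      (auto simp: \<sigma>_def action_profile_def all_strategies_def one_deviant_signals)
  then have "payoff N \<pi> p q i (\<sigma>(i := y)) < payoff N \<pi> p q i (\<sigma>(i := (\<lambda>_. Delegate j)))"
    using s i win_prob_le_delegate_to_sincere_expert[OF \<sigma>(1) _ j \<open>j \<noteq> i\<close> \<sigma>(2)]
    by (intro payoff_strict_mono[OF joint_prob_ge_0 _ s(1,3)])
      (auto simp: action_profile_fun_upd target_independent)
  then show "\<exists>\<sigma>\<in>profiles N (all_strategies N).
      payoff N \<pi> p q i (\<sigma>(i := y)) < payoff N \<pi> p q i (\<sigma>(i := (\<lambda>_. Delegate j)))"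
    using \<sigma>(1) by blast
qed

text \<open>The expert \<open>e\<close> and \<open>m\<close> outvote \<open>i\<close> in state \<open>\<not> v\<close>, so voting \<open>v\<close> costs nothing
  there, while in state \<open>v\<close> the expert abstains and \<open>i\<close> is pivotal against \<open>m\<close>.\<close>
lemma vote_in_S1:
  assumes i: "i \<in> nonexperts"
  shows "(\<lambda>_. vote v) \<in> S1 i"
  unfolding S1_def
proof (rule in_elim_step_if_rivals_beaten)
  show "(\<lambda>_. vote v) \<in> all_strategies N i" by (simp add: all_strategies_def)
  fix y assume y: "y \<in> all_strategies N i" "y \<noteq> (\<lambda>_. vote v)"
  then obtain b where b: "y b \<noteq> vote v" by auto
  obtain e where e: "e \<in> experts" using obtain_expert .
  have "i < N" "q i < 1" "e < N" "e \<noteq> i"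
    using i e voter_classes_disjoint(4) by (auto simp: experts_def nonexperts_def)
  obtain m where m: "m < N" "m \<noteq> i" "m \<noteq> e" using exists_other_voter by blast
  define \<sigma> :: "nat \<Rightarrow> strategy" where "\<sigma> = (\<lambda>k. if k < N then
      if k = e then (\<lambda>b. if b = v then Abstain else vote (\<not> v))
      else if k = m then (\<lambda>_. vote (\<not> v)) else (\<lambda>_. Abstain) else undefined)"
  have \<sigma>: "\<sigma> \<in> profiles N (all_strategies N)"
    by (simp add: \<sigma>_def restrict_in_profiles_iff all_strategies_def)
  have pointwise: "win_prob N (action_profile (\<sigma>(i := y)) s) w
      \<le> win_prob N (action_profile (\<sigma>(i := (\<lambda>_. vote v))) s) w"
    if "joint_prob N \<pi> q w s \<noteq> 0" for w s
  proof (cases "w = v")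
    case True
    then show ?thesis using win_prob_le_vote by (simp add: action_profile_fun_upd)
  next
    case False
    have "s e = w" using expert_signal_eq_state[OF that e] .
    then have "win_prob N ((action_profile \<sigma> s)(i := vote v)) w = 1"
      using False \<open>i < N\<close> \<open>e < N\<close> \<open>e \<noteq> i\<close> m
      by (intro win_prob_two_ahead[where A = "{e, m}"]) (auto simp: \<sigma>_def action_profile_def)
    then show ?thesis using win_prob_le_1 by (simp add: action_profile_fun_upd)
  qed
  let ?s = "one_deviant_signals i b v"
  have s: "?s \<in> signal_profiles N" "?s i = b" "0 < joint_prob N \<pi> q v ?s"
    using \<open>i < N\<close> \<open>q i < 1\<close> by (simp_all add: one_deviant_signals)
  have "win_prob N ((action_profile \<sigma> ?s)(i := y b)) v < win_prob N ((action_profile \<sigma> ?s)(i := vote v)) v"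
    using \<open>i < N\<close> \<open>e < N\<close> \<open>e \<noteq> i\<close> m b y(1)
    by (intro win_prob_pivotal[where A = "{}" and B = "{m}"])
      (auto simp: \<sigma>_def action_profile_def all_strategies_def one_deviant_signals)
  then have "payoff N \<pi> p q i (\<sigma>(i := y)) < payoff N \<pi> p q i (\<sigma>(i := (\<lambda>_. vote v)))"
    using s i pointwise
    by (intro payoff_strict_mono[OF joint_prob_ge_0 _ s(1,3)])
      (auto simp: action_profile_fun_upd target_independent)
  then show "\<exists>\<sigma>\<in>profiles N (all_strategies N).
      payoff N \<pi> p q i (\<sigma>(i := y)) < payoff N \<pi> p q i (\<sigma>(i := (\<lambda>_. vote v)))"
    using \<sigma> by blast
qed

lemma S2_singleton: "S1 i = {g} \<Longrightarrow> S2 i = {g}"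
  unfolding S2_def by (rule elim_step_singleton)

lemma payoff_le_delegate_in_S1:
  assumes "\<sigma> \<in> profiles N S1" "i \<in> nonexperts" "j \<in> experts"
  shows "payoff N \<pi> p q i (\<sigma>(i := y)) \<le> payoff N \<pi> p q i (\<sigma>(i := (\<lambda>_. Delegate j)))"
proof (rule payoff_le_delegate_to_sincere_expert[OF assms(1) _ assms(3,2)])
  show "\<forall>k<N. S1 k \<subseteq> all_strategies N k" using S1_subset by blast
  show "\<sigma> j = vote"
    using profiles_memD[OF assms(1)] S1_expert[OF assms(3)] assms(3) voter_classes_subset(2) by blast
qed

lemma delegate_in_S2: "i \<in> nonexperts \<Longrightarrow> j \<in> experts \<Longrightarrow> (\<lambda>_. Delegate j) \<in> S2 i"
  unfolding S2_def using delegate_in_S1 payoff_le_delegate_in_S1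
  by (intro weakly_dominant_in_elim_step) auto

lemma opposition_exists:
  assumes "i \<in> nonexperts" "M \<subseteq> nonexperts - {i}" "card M \<le> 1"
  obtains B where "partisans (\<not> w) \<union> M \<subseteq> B" "B \<subseteq> partisans (\<not> w) \<union> (nonexperts - {i})"
    "card B = N div 2"
proof -
  have fin: "finite (partisans (\<not> w))" "finite nonexperts"
    using voter_classes_subset by (auto intro: finite_subset)
  have N_div_2: "card (partisans (\<not> w)) + 1 \<le> N div 2"
    "N div 2 \<le> card (partisans (\<not> w)) + card nonexperts - 1"
    using card_voters[of w] card_experts_ge_1 card_nonexperts_ge[of w] card_nonexperts_ge[of "\<not> w"]
      div_times_less_eq_dividend[of N 2] div_mult_mod_eq[of N 2] by (simp_all; linarith)+
  have "card (partisans (\<not> w) \<union> M) \<le> N div 2"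
    using card_Un_le[of "partisans (\<not> w)" M] assms(3) N_div_2(1) by linarith
  moreover have "N div 2 \<le> card (partisans (\<not> w) \<union> (nonexperts - {i}))"
    using fin assms(1) voter_classes_disjoint(3) N_div_2(2) by (subst card_Un_disjoint) auto
  moreover have "partisans (\<not> w) \<union> M \<subseteq> partisans (\<not> w) \<union> (nonexperts - {i})"
    using assms(2) by blast
  ultimately obtain B where "partisans (\<not> w) \<union> M \<subseteq> B" "B \<subseteq> partisans (\<not> w) \<union> (nonexperts - {i})"
      "card B = N div 2"
    using exists_subset_between fin by (metis finite_Diff finite_UnI)
  then show ?thesis by (rule that)
qed

lemma sincere_experts_profile_in_S1:
  assumes "partisans (\<not> w) \<subseteq> B" "B \<subseteq> partisans (\<not> w) \<union> nonexperts"
  shows "(\<lambda>k. if k < N then if k \<in> experts then vote else if k \<in> B then (\<lambda>_. vote (\<not> w)) else (\<lambda>_. vote w)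
      else undefined) \<in> profiles N S1"
  unfolding restrict_in_profiles_iff
proof (intro allI impI)
  fix k assume "k < N"
  then show "(if k \<in> experts then vote else if k \<in> B then (\<lambda>_. vote (\<not> w)) else (\<lambda>_. vote w)) \<in> S1 k"
  proof (cases rule: voter_cases)
    case (partisan t)
    moreover have "k \<notin> experts" "k \<notin> nonexperts" "k \<notin> partisans (\<not> t)"
      using partisan voter_classes_disjoint by blast+
    ultimately show ?thesis using assms S1_partisan[OF partisan] by (cases "t = w") auto
  next
    case expert
    then show ?thesis using S1_expert by simp
  next
    case nonexpert
    then show ?thesis using vote_in_S1 voter_classes_disjoint(4) by auto
  qed
qed

lemma opposition_against:
  assumes i: "i \<in> nonexperts" and valid: "valid_action N i X" and not_expert: "\<forall>m\<in>experts. X \<noteq> Delegate m"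
  obtains w B where "X \<noteq> vote w" "\<forall>m. X = Delegate m \<longrightarrow> m \<in> B"
    "partisans (\<not> w) \<subseteq> B" "B \<subseteq> partisans (\<not> w) \<union> (nonexperts - {i})" "card B = N div 2"
proof -
  define w where "w = (\<not> (X = VoteA \<or> (\<exists>m\<in>partisans True. X = Delegate m)))"
  have against_w: "X \<noteq> vote w" "\<forall>m\<in>partisans w. X \<noteq> Delegate m"
    using voter_classes_disjoint(1)[of True] by (cases w; auto simp: w_def)+
  define M where "M = {m \<in> nonexperts. X = Delegate m}"
  have "finite M" using voter_classes_subset(3) by (auto simp: M_def intro: finite_subset)
  then have "M \<subseteq> nonexperts - {i}" "card M \<le> 1"
    using valid by (auto simp: M_def card_le_Suc0_iff_eq)
  then obtain B where B: "partisans (\<not> w) \<union> M \<subseteq> B" "B \<subseteq> partisans (\<not> w) \<union> (nonexperts - {i})"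
      "card B = N div 2"
    using opposition_exists[OF i] by blast
  have "m \<in> B" if "X = Delegate m" for m
  proof -
    have "m < N" "m \<notin> experts" using that valid not_expert by auto
    then show ?thesis
    proof (cases rule: voter_cases)
      case (partisan t)
      then show ?thesis using against_w(2) B(1) that by (cases "t = w") auto
    qed (use B(1) that in \<open>auto simp: M_def\<close>)
  qed
  then show ?thesis using that[of w B] against_w(1) B by blast
qed

text \<open>If \<open>x b\<close> is not a delegation to an expert, let the voters in the opposition \<open>B\<close> vote
  \<open>\<not> w\<close> and all others vote \<open>w\<close> or, being experts, their signal \<open>w\<close>: then \<open>i\<close> is pivotal,
  and only delegating to an expert carries her vote to \<open>w\<close>.\<close>
lemma S2_nonexpert_delegates_to_expert:
  assumes i: "i \<in> nonexperts" and x: "x \<in> S2 i"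
  shows "\<exists>j\<in>experts. x b = Delegate j"
proof (rule ccontr)
  assume "\<not> (\<exists>j\<in>experts. x b = Delegate j)"
  moreover have "x \<in> all_strategies N i" using x S2_subset S1_subset by blast
  then have valid: "valid_action N i (x b)" by (simp add: all_strategies_def)
  ultimately obtain w B where against: "x b \<noteq> vote w" "\<forall>m. x b = Delegate m \<longrightarrow> m \<in> B"
    and B: "partisans (\<not> w) \<subseteq> B" "B \<subseteq> partisans (\<not> w) \<union> (nonexperts - {i})" "card B = N div 2"
    using opposition_against[OF i] by blast
  have "i < N" "q i < 1" using i by (auto simp: nonexperts_def)
  obtain j where j: "j \<in> experts" using obtain_expert .
  then have "j < N" "j \<noteq> i" using i voter_classes_disjoint(4) by (auto simp: experts_def)
  define \<sigma> :: "nat \<Rightarrow> strategy" where "\<sigma> = (\<lambda>k. if k < N then if k \<in> experts then vote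
      else if k \<in> B then (\<lambda>_. vote (\<not> w)) else (\<lambda>_. vote w) else undefined)"
  have \<sigma>: "\<sigma> \<in> profiles N S1"
    unfolding \<sigma>_def using B by (intro sincere_experts_profile_in_S1) auto
  let ?s = "one_deviant_signals i b w"
  have s: "?s \<in> signal_profiles N" "?s i = b" "0 < joint_prob N \<pi> q w ?s"
    using \<open>i < N\<close> \<open>q i < 1\<close> by (simp_all add: one_deviant_signals)
  define A where "A = {..<N} - {i} - B"
  have "B \<subseteq> {..<N} - {i}"
    using B(2) voter_classes_subset(1)[of "\<not> w"] voter_classes_subset(3) i
      voter_classes_disjoint(3)[of "\<not> w"] by blast
  then have AB: "A \<subseteq> {..<N} - {i}" "B \<subseteq> {..<N} - {i}" "A \<inter> B = {}"
    by (auto simp: A_def)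
  have "\<forall>k<N. k \<noteq> i \<longrightarrow>
      action_profile \<sigma> ?s k = (if k \<in> A then vote w else if k \<in> B then vote (\<not> w) else Abstain)"
    using B(2) voter_classes_disjoint(2,4)
    by (auto simp: \<sigma>_def A_def action_profile_def one_deviant_signals)
  moreover have "card A = card B \<or> card A + 1 = card B"
  proof -
    have "card A = N - 1 - card B"
      using AB(2) \<open>i < N\<close> by (simp add: A_def card_Diff_subset finite_subset)
    then show ?thesis using B(3) div_times_less_eq_dividend[of N 2] div_mult_mod_eq[of N 2] by linarith
  qed
  moreover have "j \<in> A" using j \<open>j \<noteq> i\<close> B(2) voter_classes_disjoint(2,4) voter_classes_subset(2)
    by (auto simp: A_def)
  ultimately have "win_prob N ((action_profile \<sigma> ?s)(i := x b)) w
      < win_prob N ((action_profile \<sigma> ?s)(i := Delegate j)) w"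
    using \<open>i < N\<close> AB valid \<open>j < N\<close> \<open>j \<noteq> i\<close> against
    by (intro win_prob_pivotal[where A = A and B = B]) (auto simp: A_def)
  then have "payoff N \<pi> p q i (\<sigma>(i := x)) < payoff N \<pi> p q i (\<sigma>(i := (\<lambda>_. Delegate j)))"
    using s i win_prob_le_delegate_to_sincere_expert[OF \<sigma> _ j \<open>j \<noteq> i\<close>] S1_subset j \<open>j < N\<close>
    by (intro payoff_strict_mono[OF joint_prob_ge_0 _ s(1,3)])
      (auto simp: action_profile_fun_upd target_independent \<sigma>_def)
  then show False
    using not_in_elim_step_if_beaten_by_weakly_dominant[OF delegate_in_S1[OF i j] _ \<sigma>]
      payoff_le_delegate_in_S1[OF _ i j] x by (auto simp: S2_def)
qed

lemma S2_direct_action: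
  assumes "\<tau> \<in> profiles N S2" "joint_prob N \<pi> q w s \<noteq> 0" "k < N"
  shows "direct_action (action_profile \<tau> s) k = (if k \<in> partisans (\<not> w) then vote (\<not> w) else vote w)"
  using assms(3)
proof (cases rule: voter_cases)
  case (partisan t)
  then have "\<tau> k = (\<lambda>_. vote t)" "k \<notin> partisans (\<not> t)"
    using profiles_memD[OF assms(1,3)] S2_singleton[OF S1_partisan] voter_classes_disjoint(1) by blast+
  then show ?thesis
    using partisan by (cases "t = w") (auto simp: direct_action_nondelegating action_profile_def)
next
  case expert
  then have "\<tau> k = vote" "s k = w" "k \<notin> partisans (\<not> w)"
    using profiles_memD[OF assms(1,3)] S2_singleton[OF S1_expert] expert_signal_eq_state[OF assms(2)]
      voter_classes_disjoint(2) by blast+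
  then show ?thesis by (simp add: direct_action_nondelegating action_profile_def)
next
  case nonexpert
  then obtain j where j: "j \<in> experts" "\<tau> k (s k) = Delegate j"
    using S2_nonexpert_delegates_to_expert profiles_memD[OF assms(1,3)] by blast
  then have "\<tau> j = vote" "s j = w" "j < N"
    using profiles_memD[OF assms(1)] S2_singleton[OF S1_expert] expert_signal_eq_state[OF assms(2)]
      voter_classes_subset(2) by blast+
  moreover have "k \<notin> partisans (\<not> w)" using nonexpert voter_classes_disjoint(3) by blast
  ultimately show ?thesis using j(2) by (simp add: direct_action_def action_profile_def)
qed

lemma S2_win_prob:
  assumes "\<tau> \<in> profiles N S2" "joint_prob N \<pi> q w s \<noteq> 0"
  shows "win_prob N (action_profile \<tau> s) t = (if t = w then 1 else 0)"
proof -
  let ?act = "action_profile \<tau> s"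
  have "\<forall>k<N. \<not> is_delegation (direct_action ?act k)"
    using S2_direct_action[OF assms] by simp
  then have "votes_for N ?act u = card {k. k < N \<and> direct_action ?act k = vote u}" for u
    by (rule votes_for_direct)
  moreover have "{k. k < N \<and> direct_action ?act k = vote (\<not> w)} = partisans (\<not> w)"
    and "{k. k < N \<and> direct_action ?act k = vote w} = {..<N} - partisans (\<not> w)"
    using S2_direct_action[OF assms] voter_classes_subset(1)[of "\<not> w"] by (auto split: if_splits)
  ultimately have "votes_for N ?act (\<not> w) = card (partisans (\<not> w))"
    and "votes_for N ?act w = N - card (partisans (\<not> w))"
    using card_Diff_subset[OF finite_subset voter_classes_subset(1)[of "\<not> w"], OF voter_classes_subset(1)]
    by simp_all
  moreover have "card (partisans (\<not> w)) < N - card (partisans (\<not> w))"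
    using card_voters[of w] card_nonexperts_ge[of "\<not> w"] by simp
  ultimately show ?thesis
    by (cases "t = w") (auto simp: win_prob_eq_majority_score majority_score_def)
qed

lemma payoff_S2:
  assumes "\<sigma> \<in> profiles N S2" "\<tau> \<in> profiles N S2"
  shows "payoff N \<pi> p q i \<sigma> = payoff N \<pi> p q i \<tau>"
proof -
  have summand: "joint_prob N \<pi> q w s * win_prob N (action_profile \<sigma> s) t
      = joint_prob N \<pi> q w s * win_prob N (action_profile \<tau> s) t" for w s t
    using S2_win_prob[OF assms(1)] S2_win_prob[OF assms(2)] by (cases "joint_prob N \<pi> q w s = 0") auto
  show ?thesis by (simp add: payoff_eq_sum summand)
qed

lemma S2_fixpoint: "elim_step N \<pi> p q S2 = S2"
proof (rule ext)
  fix i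
  have "payoff N \<pi> p q i (\<sigma>(i := x)) = payoff N \<pi> p q i (\<sigma>(i := y))"
    if \<sigma>: "\<sigma> \<in> profiles N S2" and "x \<in> S2 i" "y \<in> S2 i" for \<sigma> x y
  proof (cases "i < N")
    case True
    then show ?thesis using payoff_S2 profiles_fun_upd that by blast
  next
    case False
    have "valid_profile N (action_profile \<sigma> s)" for s
      using valid_profile_action_profile[OF \<sigma>] S2_subset S1_subset by blast
    then have "win_prob N (action_profile (\<sigma>(i := z)) s) t = win_prob N (action_profile \<sigma> s) t" for z s t
      using False by (simp add: action_profile_fun_upd win_prob_fun_upd_outside)
    then show ?thesis by (simp add: payoff_eq_sum)
  qed
  then have "\<not> weakly_dominates N \<pi> p q S2 i y x" if "x \<in> S2 i" "y \<in> S2 i" for x y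
    using that unfolding weakly_dominates_def by (metis less_irrefl)
  then show "elim_step N \<pi> p q S2 i = S2 i" by (auto simp: elim_step_def)
qed

lemma S2_efficient: "\<sigma> \<in> profiles N S2 \<Longrightarrow> efficient N \<pi> q \<sigma>"
  unfolding efficient_def efficiency_eq_sum
  using payoff_summand_mono[OF joint_prob_ge_0] win_prob_le_1 S2_win_prob
  by (intro ballI sum_mono) auto

lemma S2_profile_exists: "profiles N S2 \<noteq> {}"
proof -
  obtain j where j: "j \<in> experts" using obtain_expert .
  have "(\<lambda>k. if k < N then if k \<in> experts then vote else if k \<in> nonexperts then (\<lambda>_. Delegate j)
      else (\<lambda>_. vote (k \<in> partisans True)) else undefined) \<in> profiles N S2"
    unfolding restrict_in_profiles_iff
  proof (intro allI impI)
    fix k assume "k < N"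
    then show "(if k \<in> experts then vote else if k \<in> nonexperts then (\<lambda>_. Delegate j)
        else (\<lambda>_. vote (k \<in> partisans True))) \<in> S2 k"
    proof (cases rule: voter_cases)
      case (partisan t)
      have "k \<notin> experts" "k \<notin> nonexperts"
        using partisan voter_classes_disjoint(2,3) by blast+
      moreover have "(k \<in> partisans True) = t"
        using partisan voter_classes_disjoint(1)[of True] by (cases t) auto
      ultimately show ?thesis using S2_singleton[OF S1_partisan[OF partisan]] by simp
    qed (use S2_singleton[OF S1_expert] delegate_in_S2 j voter_classes_disjoint(4) in auto)
  qed
  then show ?thesis by blast
qed

lemma reduced_game_2: "reduced_game N \<pi> p q 2 = S2"
  by (simp add: reduced_game_def numeral_2_eq_2 S1_def S2_def)

end

theorem proposition5:
  fixes N :: nat and \<pi> :: real and p :: "nat \<Rightarrow> pref" and q :: "nat \<Rightarrow> real"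
  assumes prior: "0 < \<pi>" "\<pi> < 1"
    and prec: "\<forall>i<N. 1/2 \<le> q i \<and> q i \<le> 1"
    and ne_pos: "card {i. i < N \<and> p i = PI \<and> q i = 1} \<ge> 1"
    and nU: "int (card {i. i < N \<and> p i = PI \<and> q i < 1})
               \<ge> int (card {i. i < N \<and> p i = PI \<and> q i = 1})
                 + \<bar>int (card {i. i < N \<and> p i = PA}) - int (card {i. i < N \<and> p i = PB})\<bar> + 1"
    and bal: "real (max (card {i. i < N \<and> p i = PI \<and> q i = 1} + card {i. i < N \<and> p i = PA})
                        (card {i. i < N \<and> p i = PI \<and> q i = 1} + card {i. i < N \<and> p i = PB}))
              \<le> real N / 2"
  shows "\<exists>k. dominance_solvable_at N \<pi> p q k
           \<and> (\<forall>\<sigma>\<in>profiles N (reduced_game N \<pi> p q k). efficient N \<pi> q \<sigma>)"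
proof -
  interpret delegation_game N \<pi> p q
    using prior prec ne_pos nU by unfold_locales auto
  have "dominance_solvable_at N \<pi> p q 2"
    unfolding dominance_solvable_at_def reduced_game_2
    using S2_fixpoint S2_profile_exists payoff_S2 by blast
  then show ?thesis
    using S2_efficient by (intro exI[of _ 2]) (simp add: reduced_game_2)
qed

end
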